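(* For integers $n\ge 0$ and $k\ge 1$, $$\mathfrak C_{2n}^{(k)}=(-4)^n(n!)^2\int_0^1\cdots\int_0^1\binom{\frac{x_1x_2\cdots x_k}{2}}{n}\binom{-\frac{x_1x_2\cdots x_k}{2}}{n}\,dx_1\,dx_2\cdots dx_k,$$ where the integral is $k$-fold.
   Context: For an integer $k$, ${\rm Lif}_{2,k}(z)=\sum_{m=0}^\infty\frac{z^{2m}}{(2m)!(2m+1)^k}$, and the poly-Cauchy numbers with level $2$, $\mathfrak C_n^{(k)}$, are defined by ${\rm Lif}_{2,k}({\rm arcsinh}\,t)=\sum_{n=0}^\infty\mathfrak C_n^{(k)}\frac{t^n}{n!}$. For real $y$, $\binom{y}{n}=\frac{y(y-1)\cdots(y-n+1)}{n!}$. *)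

theory Defs
  imports "HOL-Analysis.Analysis"
begin

definition Lif2 :: "int \<Rightarrow> real \<Rightarrow> real" where
  "Lif2 k z = (\<Sum>m. z ^ (2*m) / (fact (2*m) * (of_nat (2*m+1)) powi k))"

text \<open>Poly-Cauchy numbers with level 2: the coefficients of the exponential
  generating function Lif_{2,k}(arcsinh t) = sum_n C_n t^n / n!, i.e. the unique
  sequence whose exponential power series represents this function near 0.\<close>
definition polyCauchy2 :: "int \<Rightarrow> nat \<Rightarrow> real" where
  "polyCauchy2 k = (THE c. \<exists>r>0. \<forall>t::real. \<bar>t\<bar> < r \<longrightarrow>
      (\<lambda>n. c n * t ^ n / fact n) sums Lif2 k (arsinh t))"

end

theory Submission
  imports Defs "HOL-Probability.Probability" "HOL-Complex_Analysis.Cauchy_Integral_Formula"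
begin

(* Let X = x_1 ... x_k on the unit cube [0,1]^k. Since E[X^(2m)] = (2m+1)^(-k), integrating the
   cosh series termwise gives Lif_{2,k}(s) = E[cosh (X s)].
   For |y| <= 1 the function t \<mapsto> cosh (y arsinh t) has the power series sum_m a_m(y) t^m whose
   coefficients obey (m+1)(m+2) a_(m+2) = (y^2 - m^2) a_m, the recurrence coming from the ODE
   (1 + t^2) f'' + t f' = y^2 f; after the substitution t = sinh u this ODE becomes f'' = y^2 f,
   for which uniqueness is elementary. Since |a_m(y)| <= 1, summation and integration over y = X
   may be exchanged, so C_m = m! E[a_m(X)], and finally
   (2n)! a_(2n)(y) = prod_(j<n) (y^2 - 4 j^2) = (-4)^n (n!)^2 binom(y/2, n) binom(-y/2, n). *)

lemma second_order_ode_zero: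
  fixes W W' :: "real \<Rightarrow> real" and a b c u :: real
  assumes "a < 0" "0 < b"
    and W: "\<And>v. v \<in> {a<..<b} \<Longrightarrow> (W has_real_derivative W' v) (at v)"
    and W': "\<And>v. v \<in> {a<..<b} \<Longrightarrow> (W' has_real_derivative c\<^sup>2 * W v) (at v)"
    and "W 0 = 0" "W' 0 = 0"
    and u: "u \<in> {a<..<b}"
  shows "W u = 0"
proof -
  have "0 \<in> {a<..<b}"
    using assms by simp
  have W'_eq: "W' v = c * W v" if v: "v \<in> {a<..<b}" for v
  proof -
    have "(W' v - c * W v) * exp (c * v) = (W' 0 - c * W 0) * exp (c * 0)"
    proof (rule DERIV_isconst3[OF _ v \<open>0 \<in> {a<..<b}\<close>])
      fix x assume x: "x \<in> {a<..<b}"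
      show "((\<lambda>v. (W' v - c * W v) * exp (c * v)) has_real_derivative 0) (at x)"
        by (auto intro!: derivative_eq_intros W[OF x] W'[OF x] simp: algebra_simps power2_eq_square)
    qed (use assms in simp)
    then show ?thesis
      using assms by simp
  qed
  have "W u * exp (- c * u) = W 0 * exp (- c * 0)"
  proof (rule DERIV_isconst3[OF _ u \<open>0 \<in> {a<..<b}\<close>])
    fix x assume x: "x \<in> {a<..<b}"
    show "((\<lambda>v. W v * exp (- c * v)) has_real_derivative 0) (at x)"
      by (auto intro!: derivative_eq_intros W[OF x] simp: W'_eq[OF x] algebra_simps)
  qed (use assms in simp)
  then show ?thesis
    using assms by simp
qed

lemma powser_sums_zero_imp_zero:
  fixes a :: "nat \<Rightarrow> real"
  assumes "0 < r" and sums_0: "\<And>t. \<bar>t\<bar> < r \<Longrightarrow> (\<lambda>n. a n * t ^ n) sums 0"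
  shows "a n = 0"
proof (rule ccontr)
  assume "a n \<noteq> 0"
  moreover have "a 0 = 0"
    using sums_0[of 0] \<open>0 < r\<close> by simp
  ultimately have "n > 0"
    by (cases n) auto
  show False
  proof (rule powser_0_nonzero[where r = r and a = a and \<xi> = 0 and f = "\<lambda>_. 0" and m = n])
    fix s :: real
    assume "0 < s" and "\<And>z::real. z \<in> cball 0 s - {0} \<Longrightarrow> (0::real) \<noteq> 0"
    from this(2)[of s] \<open>0 < s\<close> show False
      by simp
  qed (use sums_0 \<open>0 < r\<close> \<open>a n \<noteq> 0\<close> \<open>n > 0\<close> in auto)
qed

lemma has_real_derivative_powser_sinh:
  fixes c :: "nat \<Rightarrow> real"
  assumes conv: "\<And>s. \<bar>s\<bar> < K \<Longrightarrow> summable (\<lambda>m. c m * s ^ m)" and "\<bar>sinh u\<bar> < K"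
  shows "((\<lambda>u. \<Sum>m. c m * sinh u ^ m) has_real_derivative
           (\<Sum>m. diffs c m * sinh u ^ m) * cosh u) (at u)"
proof -
  have "((\<lambda>s. \<Sum>m. c m * s ^ m) has_real_derivative (\<Sum>m. diffs c m * sinh u ^ m)) (at (sinh u))"
    using assms by (intro termdiffs_strong'[of K]) auto
  from DERIV_chain2[OF this has_field_derivative_sinh[OF DERIV_ident]] show ?thesis
    by simp
qed

lemma sums_times_diffs_powser:
  fixes c :: "nat \<Rightarrow> real"
  assumes "(\<lambda>m. diffs c m * s ^ m) sums S"
  shows "(\<lambda>m. real m * c m * s ^ m) sums (s * S)"
proof -
  have "(\<lambda>m. real (m + 1) * c (m + 1) * s ^ (m + 1)) sums (s * S)"
    using sums_mult[OF assms, of s] by (simp add: diffs_def algebra_simps)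
  then show ?thesis
    by (subst (asm) sums_zero_iff_shift) simp_all
qed

lemma sums_times_diffs_diffs_powser:
  fixes c :: "nat \<Rightarrow> real"
  assumes "(\<lambda>m. diffs (diffs c) m * s ^ m) sums S"
  shows "(\<lambda>m. real m * (real m - 1) * c m * s ^ m) sums (s\<^sup>2 * S)"
proof -
  have "(\<lambda>m. real (m + 2) * (real (m + 2) - 1) * c (m + 2) * s ^ (m + 2)) sums (s\<^sup>2 * S)"
    using sums_mult[OF assms, of "s\<^sup>2"] by (simp add: diffs_def algebra_simps power2_eq_square)
  then show ?thesis
    by (subst (asm) sums_zero_iff_shift) (auto simp: less_2_cases_iff)
qed

lemma cosh_converges_even: "(\<lambda>n. x ^ (2 * n) / fact (2 * n)) sums cosh (x::real)"
proof -
  have "(\<lambda>n. (\<lambda>m. if even m then x ^ m /\<^sub>R fact m else 0) (2 * n)) sums cosh x"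
    using cosh_converges[of x]
    by (subst sums_mono_reindex) (auto simp: strict_mono_def elim!: oddE)
  then show ?thesis
    by (simp add: divide_inverse_commute)
qed

lemma (in prob_space) sums_integral_bounded:
  fixes f :: "nat \<Rightarrow> 'a \<Rightarrow> real"
  assumes meas: "\<And>n. f n \<in> borel_measurable M"
    and bound: "\<And>n x. x \<in> space M \<Longrightarrow> \<bar>f n x\<bar> \<le> b n" and "summable b"
  shows "(\<lambda>n. \<integral>x. f n x \<partial>M) sums (\<integral>x. (\<Sum>n. f n x) \<partial>M)"
proof (rule sums_integral)
  show int: "integrable M (f n)" for n
    by (rule integrable_const_bound[where B = "b n"]) (auto intro!: AE_I2 bound meas)
  show "AE x in M. summable (\<lambda>n. norm (f n x))"
    by (intro AE_I2 summable_comparison_test[OF _ \<open>summable b\<close>]) (auto intro!: bound)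
  have "(\<integral>x. norm (f n x) \<partial>M) \<le> b n" for n
    using integral_mono[of M "\<lambda>x. norm (f n x)" "\<lambda>_. b n"] int bound by (simp add: prob_space)
  then show "summable (\<lambda>n. \<integral>x. norm (f n x) \<partial>M)"
    by (intro summable_comparison_test[OF _ \<open>summable b\<close>]) auto
qed

fun cosh_arsinh_coeff :: "real \<Rightarrow> nat \<Rightarrow> real" where
  "cosh_arsinh_coeff y 0 = 1"
| "cosh_arsinh_coeff y (Suc 0) = 0"
| "cosh_arsinh_coeff y (Suc (Suc m)) =
     (y\<^sup>2 - (real m)\<^sup>2) * cosh_arsinh_coeff y m / ((real m + 1) * (real m + 2))"

lemma abs_cosh_arsinh_coeff_le_1:
  assumes "\<bar>y\<bar> \<le> 1"
  shows "\<bar>cosh_arsinh_coeff y m\<bar> \<le> 1"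
proof (induction m rule: nat_induct2)
  case (step m)
  have "y\<^sup>2 \<le> 1"
    using assms by (simp add: abs_square_le_1)
  then have "\<bar>y\<^sup>2 - (real m)\<^sup>2\<bar> \<le> (real m)\<^sup>2 + 1"
    unfolding abs_le_iff using zero_le_power2[of y] zero_le_power2[of "real m"] by linarith
  also have "\<dots> \<le> (real m + 1) * (real m + 2)"
    by (simp add: algebra_simps power2_eq_square)
  finally have "\<bar>y\<^sup>2 - (real m)\<^sup>2\<bar> * \<bar>cosh_arsinh_coeff y m\<bar> \<le> (real m + 1) * (real m + 2)"
    using step.IH(1) by (simp add: mult_le_one order_trans[OF mult_right_le_one_le])
  then show ?case
    by (simp add: abs_mult abs_divide divide_le_eq_1)
qed simp_all

lemma borel_measurable_cosh_arsinh_coeff [measurable (raw)]: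
  assumes [measurable]: "f \<in> borel_measurable M"
  shows "(\<lambda>x. cosh_arsinh_coeff (f x) m) \<in> borel_measurable M"
proof (induction m rule: nat_induct2)
  case (step m)
  note step.IH(1)[measurable]
  show ?case
    unfolding add_2_eq_Suc' cosh_arsinh_coeff.simps by measurable
qed simp_all

lemma diffs_diffs_cosh_arsinh_coeff:
  "diffs (diffs (cosh_arsinh_coeff y)) m = (y\<^sup>2 - (real m)\<^sup>2) * cosh_arsinh_coeff y m"
proof -
  have "diffs (diffs (cosh_arsinh_coeff y)) m
      = (real m + 1) * (real m + 2) * cosh_arsinh_coeff y (m + 2)"
    by (simp add: diffs_def algebra_simps del: cosh_arsinh_coeff.simps)
  then show ?thesis
    by (simp add: add_pos_pos)
qed

lemma summable_cosh_arsinh_coeff: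
  assumes "\<bar>y\<bar> \<le> 1" "\<bar>s\<bar> < 1"
  shows "summable (\<lambda>m. cosh_arsinh_coeff y m * s ^ m)"
proof (rule summable_comparison_test)
  show "\<exists>N. \<forall>m\<ge>N. norm (cosh_arsinh_coeff y m * s ^ m) \<le> \<bar>s\<bar> ^ m"
    using abs_cosh_arsinh_coeff_le_1[OF assms(1)]
    by (auto simp: abs_mult power_abs intro!: mult_left_le_one_le)
  show "summable (\<lambda>m. \<bar>s\<bar> ^ m)"
    using assms(2) by simp
qed

lemma cosh_arsinh_coeff_ode:
  fixes y s :: real
  assumes "\<bar>y\<bar> \<le> 1" "\<bar>s\<bar> < 1"
  defines "a \<equiv> cosh_arsinh_coeff y"
  shows "(1 + s\<^sup>2) * (\<Sum>m. diffs (diffs a) m * s ^ m) + s * (\<Sum>m. diffs a m * s ^ m)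
           = y\<^sup>2 * (\<Sum>m. a m * s ^ m)"
proof -
  have conv0: "summable (\<lambda>m. a m * z ^ m)" if "norm z < 1" for z :: real
    using summable_cosh_arsinh_coeff assms(1) that by (simp add: a_def)
  have conv1: "summable (\<lambda>m. diffs a m * z ^ m)" if "norm z < 1" for z :: real
    using that conv0 by (rule termdiff_converges)
  have conv2: "summable (\<lambda>m. diffs (diffs a) m * s ^ m)"
    by (rule termdiff_converges[OF _ conv1]) (use assms(2) in simp)
  define P0 P1 P2 where "P0 = (\<Sum>m. a m * s ^ m)" and "P1 = (\<Sum>m. diffs a m * s ^ m)"
    and "P2 = (\<Sum>m. diffs (diffs a) m * s ^ m)"
  have S0: "(\<lambda>m. a m * s ^ m) sums P0"
    using conv0 assms(2) by (simp add: P0_def summable_sums)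
  have S1: "(\<lambda>m. diffs a m * s ^ m) sums P1"
    using conv1 assms(2) by (simp add: P1_def summable_sums)
  have S2: "(\<lambda>m. diffs (diffs a) m * s ^ m) sums P2"
    using conv2 by (simp add: P2_def summable_sums)
  have "(\<lambda>m. diffs (diffs a) m * s ^ m + real m * (real m - 1) * a m * s ^ m
            + real m * a m * s ^ m - y\<^sup>2 * (a m * s ^ m))
        sums (P2 + s\<^sup>2 * P2 + s * P1 - y\<^sup>2 * P0)"
    by (intro sums_add sums_diff sums_mult S0 S2 sums_times_diffs_powser[OF S1]
        sums_times_diffs_diffs_powser[OF S2])
  moreover have "diffs (diffs a) m * s ^ m + real m * (real m - 1) * a m * s ^ m
            + real m * a m * s ^ m - y\<^sup>2 * (a m * s ^ m) = 0" for m
    unfolding a_def diffs_diffs_cosh_arsinh_coeff by (simp add: algebra_simps power2_eq_square)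
  ultimately have "(\<lambda>m. 0) sums (P2 + s\<^sup>2 * P2 + s * P1 - y\<^sup>2 * P0)"
    by simp
  then have "P2 + s\<^sup>2 * P2 + s * P1 - y\<^sup>2 * P0 = 0"
    by (rule sums_unique2[OF _ sums_zero])
  then show ?thesis
    by (simp add: P0_def P1_def P2_def algebra_simps)
qed

lemma cosh_arsinh_coeff_ode_sinh:
  fixes y v :: real
  assumes "\<bar>y\<bar> \<le> 1" "\<bar>sinh v\<bar> < 1"
  defines "a \<equiv> cosh_arsinh_coeff y"
  shows "(\<Sum>m. diffs a m * sinh v ^ m) * sinh v
           + (\<Sum>m. diffs (diffs a) m * sinh v ^ m) * cosh v * cosh v
         = y\<^sup>2 * (\<Sum>m. a m * sinh v ^ m)"
proof -
  have cosh_sq: "cosh v * cosh v = 1 + (sinh v)\<^sup>2"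
    using cosh_square_eq[of v] by (simp add: power2_eq_square)
  have "(\<Sum>m. diffs a m * sinh v ^ m) * sinh v
          + (\<Sum>m. diffs (diffs a) m * sinh v ^ m) * cosh v * cosh v
        = (1 + (sinh v)\<^sup>2) * (\<Sum>m. diffs (diffs a) m * sinh v ^ m)
          + sinh v * (\<Sum>m. diffs a m * sinh v ^ m)"
    unfolding mult.assoc[of _ "cosh v" "cosh v"] cosh_sq by (simp add: algebra_simps)
  also have "\<dots> = y\<^sup>2 * (\<Sum>m. a m * sinh v ^ m)"
    unfolding a_def by (rule cosh_arsinh_coeff_ode[OF assms(1,2)])
  finally show ?thesis .
qed

lemma cosh_arsinh_powser_sinh:
  assumes y: "\<bar>y\<bar> \<le> 1" and u: "u \<in> {-arsinh 1<..<arsinh 1}"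
  shows "(\<Sum>m. cosh_arsinh_coeff y m * sinh u ^ m) = cosh (y * u)"
proof -
  define a where "a = cosh_arsinh_coeff y"
  define P where "P c v = (\<Sum>m. c m * sinh v ^ m)" for c :: "nat \<Rightarrow> real" and v :: real
  have conv0: "summable (\<lambda>m. a m * s ^ m)" if "\<bar>s\<bar> < 1" for s
    using summable_cosh_arsinh_coeff y that by (simp add: a_def)
  have conv1: "summable (\<lambda>m. diffs a m * s ^ m)" if "\<bar>s\<bar> < 1" for s
    using that conv0 by (intro termdiff_converges) auto
  have sinh_lt_1: "\<bar>sinh v\<bar> < 1" if "v \<in> {-arsinh 1<..<arsinh 1}" for v :: real
    using that sinh_real_less_iff[of v "arsinh 1"] sinh_real_less_iff[of "-arsinh 1" v]
    by (auto simp: abs_less_iff)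
  define W W' where "W v = P a v - cosh (y * v)"
    and "W' v = P (diffs a) v * cosh v - y * sinh (y * v)" for v :: real
  have "W u = 0"
  proof (rule second_order_ode_zero[of "-arsinh 1" "arsinh 1" W W' y])
    fix v :: real
    assume v: "v \<in> {-arsinh 1<..<arsinh 1}"
    have dP0: "(P a has_real_derivative P (diffs a) v * cosh v) (at v)"
      and dP1: "(P (diffs a) has_real_derivative P (diffs (diffs a)) v * cosh v) (at v)"
      unfolding P_def[abs_def] using conv0 conv1 sinh_lt_1[OF v]
      by (auto intro!: has_real_derivative_powser_sinh[where K = 1])
    show "(W has_real_derivative W' v) (at v)"
      unfolding W_def[abs_def] W'_def by (auto intro!: derivative_eq_intros dP0)
    have "(W' has_real_derivative
            P (diffs a) v * sinh v + P (diffs (diffs a)) v * cosh v * cosh v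
              - y * (cosh (y * v) * y)) (at v)"
      unfolding W'_def[abs_def] by (auto intro!: derivative_eq_intros dP1)
    moreover have "P (diffs a) v * sinh v + P (diffs (diffs a)) v * cosh v * cosh v
        - y * (cosh (y * v) * y) = y\<^sup>2 * W v"
    proof -
      have ode: "P (diffs a) v * sinh v + P (diffs (diffs a)) v * cosh v * cosh v = y\<^sup>2 * P a v"
        unfolding P_def a_def by (rule cosh_arsinh_coeff_ode_sinh[OF y sinh_lt_1[OF v]])
      show ?thesis
        unfolding ode W_def by (simp add: algebra_simps power2_eq_square)
    qed
    ultimately show "(W' has_real_derivative y\<^sup>2 * W v) (at v)"
      by simp
  next
    have "P a 0 = 1" "P (diffs a) 0 = 0"
      by (simp_all add: P_def a_def diffs_def)
    then show "W 0 = 0" "W' 0 = 0"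
      by (simp_all add: W_def W'_def)
  qed (use u in simp_all)
  then show ?thesis
    by (simp add: W_def P_def a_def)
qed

lemma cosh_arsinh_sums:
  assumes "\<bar>y\<bar> \<le> 1" and "\<bar>t\<bar> < 1"
  shows "(\<lambda>m. cosh_arsinh_coeff y m * t ^ m) sums cosh (y * arsinh t)"
proof -
  have "arsinh t \<in> {-arsinh 1<..<arsinh 1}"
    using assms(2) arsinh_less_iff_real[of t 1] arsinh_less_iff_real[of "-1" t]
    by (auto simp: abs_less_iff arsinh_minus_real)
  from cosh_arsinh_powser_sinh[OF assms(1) this] show ?thesis
    using summable_cosh_arsinh_coeff[OF assms] by (simp add: sums_iff)
qed

lemma fact_mult_cosh_arsinh_coeff_even:
  "fact (2 * n) * cosh_arsinh_coeff y (2 * n) = (\<Prod>j<n. y\<^sup>2 - 4 * (real j)\<^sup>2)"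
proof (induction n)
  case (Suc n)
  define F where "F = (2 * real n + 1) * (2 * real n + 2)"
  have "fact (2 * Suc n) = fact (2 * n) * F"
    by (simp add: F_def algebra_simps)
  moreover have "cosh_arsinh_coeff y (2 * Suc n)
      = (y\<^sup>2 - 4 * (real n)\<^sup>2) * cosh_arsinh_coeff y (2 * n) / F"
    by (simp add: F_def power_mult_distrib add_ac)
  moreover have "F \<noteq> 0"
    by (simp add: F_def add_pos_pos)
  ultimately have "fact (2 * Suc n) * cosh_arsinh_coeff y (2 * Suc n)
      = (y\<^sup>2 - 4 * (real n)\<^sup>2) * (fact (2 * n) * cosh_arsinh_coeff y (2 * n))"
    by (simp only:) (simp add: field_simps)
  with Suc.IH show ?case
    by simp
qed simp

lemma gbinomial_half_mult_gbinomial_neg_half: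
  fixes y :: real
  shows "(-4) ^ n * (fact n)\<^sup>2 * ((y / 2 gchoose n) * (- y / 2 gchoose n))
       = (\<Prod>j<n. y\<^sup>2 - 4 * (real j)\<^sup>2)"
proof -
  have "(-4) ^ n * (fact n)\<^sup>2 * ((y / 2 gchoose n) * (- y / 2 gchoose n))
      = (-4) ^ n * (((y / 2 gchoose n) * fact n) * ((- y / 2 gchoose n) * fact n))"
    by (simp add: power2_eq_square)
  also have "\<dots> = (-4) ^ n * ((\<Prod>j<n. y / 2 - real j) * (\<Prod>j<n. - y / 2 - real j))"
    by (simp add: gbinomial_mult_fact' atLeast0LessThan)
  also have "\<dots> = (\<Prod>j<n. (-4) * ((y / 2 - real j) * (- y / 2 - real j)))"
    by (simp only: prod.distrib prod_constant card_lessThan)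
  also have "\<dots> = (\<Prod>j<n. y\<^sup>2 - 4 * (real j)\<^sup>2)"
    by (simp add: algebra_simps power2_eq_square)
  finally show ?thesis .
qed

abbreviation unit_cube :: "nat \<Rightarrow> (nat \<Rightarrow> real) measure" where
  "unit_cube k \<equiv> Pi\<^sub>M {..<k} (\<lambda>_. restrict_space lborel {0..1})"

lemma prob_space_unit_interval: "prob_space (restrict_space lborel {0..1::real})"
  by (rule prob_spaceI) (simp add: space_restrict_space emeasure_restrict_space)

lemma prob_space_unit_cube: "prob_space (unit_cube k)"
  by (intro prob_space_PiM prob_space_unit_interval)

lemma prod_in_unit_interval: "x \<in> space (unit_cube k) \<Longrightarrow> (\<Prod>i<k. x i) \<in> {0..1}"
  by (auto simp: space_PiM space_restrict_space PiE_def Pi_def intro!: prod_nonneg prod_le_1)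

lemma borel_measurable_prod_coords [measurable]:
  "(\<lambda>x. \<Prod>i<k. x i) \<in> borel_measurable (unit_cube k)"
proof (rule borel_measurable_prod)
  fix i assume "i \<in> {..<k}"
  have "(\<lambda>x. x) \<in> borel_measurable (restrict_space lborel {0..1::real})"
    by (intro measurable_restrict_space1) simp
  with \<open>i \<in> {..<k}\<close> show "(\<lambda>x. x i) \<in> borel_measurable (unit_cube k)"
    by (intro measurable_compose[OF measurable_component_singleton])
qed

lemma integral_prod_power_unit_cube:
  "(\<integral>x. (\<Prod>i<k. x i) ^ j \<partial>unit_cube k) = 1 / (real j + 1) ^ k"
proof -
  interpret product_sigma_finite "\<lambda>_. restrict_space lborel {0..1::real}"
    by (simp add: product_sigma_finite_def prob_space_imp_sigma_finite prob_space_unit_interval)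
  interpret U: prob_space "restrict_space lborel {0..1::real}"
    by (rule prob_space_unit_interval)
  have "integrable (restrict_space lborel {0..1}) (\<lambda>y::real. y ^ j)"
    by (rule U.integrable_const_bound[where B = 1])
      (auto simp: space_restrict_space power_le_one intro!: AE_I2 measurable_restrict_space1)
  then have "(\<integral>x. (\<Prod>i<k. x i) ^ j \<partial>unit_cube k)
      = (\<Prod>i<k. \<integral>y. y ^ j \<partial>restrict_space lborel {0..1})"
    unfolding prod_power_distrib by (intro product_integral_prod[where f = "\<lambda>_ y. y ^ j"]) auto
  also have "(\<integral>y. y ^ j \<partial>restrict_space lborel {0..1}) = 1 / (real j + 1)"
    by (simp add: integral_restrict_space integral_power mult.commute)
  finally show ?thesis
    by (simp add: power_one_over)
qed

lemma Lif2_eq_integral_cosh: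
  "Lif2 (int k) s = (\<integral>x. cosh ((\<Prod>i<k. x i) * s) \<partial>unit_cube k)"
proof -
  interpret prob_space "unit_cube k"
    by (rule prob_space_unit_cube)
  have "(\<lambda>m. \<integral>x. ((\<Prod>i<k. x i) * s) ^ (2 * m) / fact (2 * m) \<partial>unit_cube k)
      sums (\<integral>x. (\<Sum>m. ((\<Prod>i<k. x i) * s) ^ (2 * m) / fact (2 * m)) \<partial>unit_cube k)"
  proof (rule sums_integral_bounded)
    show "\<bar>((\<Prod>i<k. x i) * s) ^ (2 * m) / fact (2 * m)\<bar> \<le> s ^ (2 * m) / fact (2 * m)"
      if "x \<in> space (unit_cube k)" for m x
    proof -
      have "0 \<le> s ^ (2 * m)"
        by (simp add: zero_le_even_power)
      then have "\<bar>\<Prod>i<k. x i\<bar> ^ (2 * m) * s ^ (2 * m) \<le> s ^ (2 * m)"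
        using prod_in_unit_interval[OF that] by (intro mult_left_le_one_le power_le_one) auto
      then show ?thesis
        by (simp add: abs_mult power_mult_distrib power_even_abs divide_right_mono)
    qed
    show "summable (\<lambda>m. s ^ (2 * m) / fact (2 * m))"
      using cosh_converges_even by (rule sums_summable)
  qed simp
  also have "(\<lambda>m. \<integral>x. ((\<Prod>i<k. x i) * s) ^ (2 * m) / fact (2 * m) \<partial>unit_cube k)
      = (\<lambda>m. s ^ (2 * m) / (fact (2 * m) * of_nat (2 * m + 1) powi int k))"
    by (simp add: power_mult_distrib integral_prod_power_unit_cube power_int_of_nat field_simps)
  also have "(\<lambda>x. \<Sum>m. ((\<Prod>i<k. x i) * s) ^ (2 * m) / fact (2 * m)) = (\<lambda>x. cosh ((\<Prod>i<k. x i) * s))"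
    using cosh_converges_even by (simp add: sums_iff)
  finally show ?thesis
    by (simp add: Lif2_def sums_iff)
qed

lemma polyCauchy2_eqI:
  assumes "0 < r"
    and c: "\<And>t. \<bar>t\<bar> < r \<Longrightarrow> (\<lambda>n. c n * t ^ n / fact n) sums Lif2 k (arsinh t)"
  shows "polyCauchy2 k = c"
  unfolding polyCauchy2_def
proof (rule the_equality)
  show "\<exists>r>0. \<forall>t. \<bar>t\<bar> < r \<longrightarrow> (\<lambda>n. c n * t ^ n / fact n) sums Lif2 k (arsinh t)"
    using assms by blast
next
  fix d
  assume "\<exists>r>0. \<forall>t. \<bar>t\<bar> < r \<longrightarrow> (\<lambda>n. d n * t ^ n / fact n) sums Lif2 k (arsinh t)"
  then obtain r' where "0 < r'"
    and d: "\<And>t. \<bar>t\<bar> < r' \<Longrightarrow> (\<lambda>n. d n * t ^ n / fact n) sums Lif2 k (arsinh t)"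
    by blast
  have "(d n - c n) / fact n = 0" for n
  proof (rule powser_sums_zero_imp_zero)
    show "0 < min r r'"
      using \<open>0 < r\<close> \<open>0 < r'\<close> by simp
    show "(\<lambda>n. (d n - c n) / fact n * t ^ n) sums 0" if "\<bar>t\<bar> < min r r'" for t
      using sums_diff[OF d[of t] c[of t]] that by (simp add: algebra_simps diff_divide_distrib)
  qed
  then show "d = c"
    by auto
qed

lemma polyCauchy2_eq_integral_cosh_arsinh_coeff:
  "polyCauchy2 (int k) m = fact m * (\<integral>x. cosh_arsinh_coeff (\<Prod>i<k. x i) m \<partial>unit_cube k)"
proof -
  interpret prob_space "unit_cube k"
    by (rule prob_space_unit_cube)
  have "(\<lambda>m. (\<integral>x. cosh_arsinh_coeff (\<Prod>i<k. x i) m \<partial>unit_cube k) * t ^ m)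
      sums Lif2 (int k) (arsinh t)" if t: "\<bar>t\<bar> < 1" for t
  proof -
    have "(\<lambda>m. \<integral>x. cosh_arsinh_coeff (\<Prod>i<k. x i) m * t ^ m \<partial>unit_cube k)
        sums (\<integral>x. (\<Sum>m. cosh_arsinh_coeff (\<Prod>i<k. x i) m * t ^ m) \<partial>unit_cube k)"
    proof (rule sums_integral_bounded)
      show "\<bar>cosh_arsinh_coeff (\<Prod>i<k. x i) m * t ^ m\<bar> \<le> \<bar>t\<bar> ^ m"
        if "x \<in> space (unit_cube k)" for m x
        using abs_cosh_arsinh_coeff_le_1[of "\<Prod>i<k. x i" m] prod_in_unit_interval[OF that]
        by (auto simp: abs_mult power_abs intro!: mult_left_le_one_le)
      show "summable (\<lambda>m. \<bar>t\<bar> ^ m)"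
        using t by simp
    qed measurable
    also have "(\<integral>x. (\<Sum>m. cosh_arsinh_coeff (\<Prod>i<k. x i) m * t ^ m) \<partial>unit_cube k)
        = (\<integral>x. cosh ((\<Prod>i<k. x i) * arsinh t) \<partial>unit_cube k)"
      using prod_in_unit_interval t
      by (intro Bochner_Integration.integral_cong refl sums_unique[symmetric] cosh_arsinh_sums) auto
    finally show ?thesis
      by (simp add: Lif2_eq_integral_cosh)
  qed
  then have "polyCauchy2 (int k) = (\<lambda>m. fact m * (\<integral>x. cosh_arsinh_coeff (\<Prod>i<k. x i) m \<partial>unit_cube k))"
    by (intro polyCauchy2_eqI[of 1]) auto
  then show ?thesis
    by simp
qed

theorem corollary1:
  fixes n :: nat and k :: nat
  assumes "k \<ge> 1"
  shows "polyCauchy2 (int k) (2*n) =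
    (-4) ^ n * (fact n) ^ 2 *
    (\<integral>x. (((\<Prod>i<k. x i) / 2) gchoose n) * ((- (\<Prod>i<k. x i) / 2) gchoose n)
        \<partial>(Pi\<^sub>M {..<k} (\<lambda>_. restrict_space lborel {0..1::real})))"
proof -
  have "polyCauchy2 (int k) (2 * n)
      = (\<integral>x. fact (2 * n) * cosh_arsinh_coeff (\<Prod>i<k. x i) (2 * n) \<partial>unit_cube k)"
    by (simp add: polyCauchy2_eq_integral_cosh_arsinh_coeff)
  also have "\<dots> = (\<integral>x. (-4) ^ n * (fact n)\<^sup>2 *
      ((((\<Prod>i<k. x i) / 2) gchoose n) * ((- (\<Prod>i<k. x i) / 2) gchoose n)) \<partial>unit_cube k)"
    by (simp only: fact_mult_cosh_arsinh_coeff_even gbinomial_half_mult_gbinomial_neg_half)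
  finally show ?thesis
    by simp
qed

end
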